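(* Let $J$ be a nonempty basic cylinder in $M_a$ and $p\in J$. Then $$\mathrm{GS}(J,p)=\Big\{p+\sum_{i\in\Lambda(J)}\alpha_ie_i\in M_a:\ \alpha_i\in\mathbb R \text{ for all } i\in\Lambda(J)\Big\}.$$
   Context: Let $a=\{a_i\}$ be a sequence of positive reals with $\sum_i a_i^2<\infty$, $M_a=\{x\in\mathbb{R}^{\mathbb N}:\sum_i a_i^2x_i^2<\infty\}$ with inner product $\langle x,y\rangle_a=\sum_i a_i^2x_iy_i$ and norm $\|\cdot\|_a$. $e_i$ denotes the sequence with $1$ in position $i$ and $0$ elsewhere; infinite sums are $\|\cdot\|_a$-limits of partial sums. For nonempty $E\subset M_a$, $\Lambda(E)$ is the set of $i$ for which there exist $x\in E$ and $\alpha\ne0$ with $x+\alpha e_i\in E$. For $p\in E$, $\mathrm{GS}(E,p)=\{p+\sum_i\alpha_i(x_i-p)\in M_a: x_i\in E,\ \alpha_i\in\mathbb R\}$, the index running over a finite or countable subset of $\mathbb N$. A basic cylinder is a set $J=\prod_{i=1}^\infty J_i$ where, for some $n\in\mathbb N$ and pairwise disjoint $\Lambda_1,\dots,\Lambda_4\subset\{1,\dots,n\}$: $J_i=[0,p_{2i}]$ ($i\in\Lambda_1$), $[p_{1i},p_{2i}]$ ($i\in\Lambda_2$), $[p_{1i},1]$ ($i\in\Lambda_3$), $\{p_{1i}\}$ ($i\in\Lambda_4$), $[0,1]$ otherwise, with $0<p_{1i}<p_{2i}<1$ for $i\in\Lambda_1\cup\Lambda_2\cup\Lambda_3$ and $0\le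 p_{1i}\le1$ for $i\in\Lambda_4$. *)

theory Defs
  imports "HOL-Analysis.Analysis"
begin

text \<open>Sequences are functions nat => real; the paper's index set N = {1,2,...} is
  identified with nat = {0,1,...} (shift by one).\<close>

definition Ma :: "(nat \<Rightarrow> real) \<Rightarrow> (nat \<Rightarrow> real) set" where
  "Ma a = {x. summable (\<lambda>i. (a i)\<^sup>2 * (x i)\<^sup>2)}"

definition inner_a :: "(nat \<Rightarrow> real) \<Rightarrow> (nat \<Rightarrow> real) \<Rightarrow> (nat \<Rightarrow> real) \<Rightarrow> real" where
  "inner_a a x y = (\<Sum>i. (a i)\<^sup>2 * x i * y i)"

definition norm_a :: "(nat \<Rightarrow> real) \<Rightarrow> (nat \<Rightarrow> real) \<Rightarrow> real" where
  "norm_a a x = sqrt (inner_a a x x)"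

definition e :: "nat \<Rightarrow> nat \<Rightarrow> real" where
  "e i = (\<lambda>j. if j = i then 1 else 0)"

definition a_limit :: "(nat \<Rightarrow> real) \<Rightarrow> (nat \<Rightarrow> nat \<Rightarrow> real) \<Rightarrow> (nat \<Rightarrow> real) \<Rightarrow> bool" where
  "a_limit a S y \<longleftrightarrow> y \<in> Ma a \<and>
     (\<forall>\<epsilon>>0. \<forall>\<^sub>F N in sequentially.
        (\<lambda>j. S N j - y j) \<in> Ma a \<and> norm_a a (\<lambda>j. S N j - y j) < \<epsilon>)"

definition Lam :: "(nat \<Rightarrow> real) set \<Rightarrow> nat set" where
  "Lam E = {i. \<exists>x\<in>E. \<exists>\<alpha>::real. \<alpha> \<noteq> 0 \<and> (\<lambda>j. x j + \<alpha> * e i j) \<in> E}"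

text \<open>GS(E,p): p + sum over a (finite or countable) index set I of alpha_i (x_i - p),
  the infinite sum being the norm_a-limit of the partial sums taken in increasing
  order of the indices; the result is required to lie in M_a.\<close>
definition GS :: "(nat \<Rightarrow> real) \<Rightarrow> (nat \<Rightarrow> real) set \<Rightarrow> (nat \<Rightarrow> real) \<Rightarrow> (nat \<Rightarrow> real) set" where
  "GS a E p = {y. \<exists>(I::nat set) (x::nat \<Rightarrow> nat \<Rightarrow> real) (\<alpha>::nat \<Rightarrow> real).
      (\<forall>i\<in>I. x i \<in> E) \<and>
      a_limit a (\<lambda>N j. p j + (\<Sum>i\<in>I \<inter> {..<N}. \<alpha> i * (x i j - p j))) y}"

definition basic_cylinder :: "(nat \<Rightarrow> real) set \<Rightarrow> bool" where
  "basic_cylinder J \<longleftrightarrow> (\<exists>(n::nat) L1 L2 L3 L4 (p1::nat \<Rightarrow> real) (p2::nat \<Rightarrow> real).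
     L1 \<subseteq> {..<n} \<and> L2 \<subseteq> {..<n} \<and> L3 \<subseteq> {..<n} \<and> L4 \<subseteq> {..<n} \<and>
     L1 \<inter> L2 = {} \<and> L1 \<inter> L3 = {} \<and> L1 \<inter> L4 = {} \<and>
     L2 \<inter> L3 = {} \<and> L2 \<inter> L4 = {} \<and> L3 \<inter> L4 = {} \<and>
     (\<forall>i \<in> L1 \<union> L2 \<union> L3. 0 < p1 i \<and> p1 i < p2 i \<and> p2 i < 1) \<and>
     (\<forall>i \<in> L4. 0 \<le> p1 i \<and> p1 i \<le> 1) \<and>
     J = {x. \<forall>i. x i \<in> (if i \<in> L1 then {0..p2 i}
                          else if i \<in> L2 then {p1 i..p2 i}
                          else if i \<in> L3 then {p1 i..1}
                          else if i \<in> L4 then {p1 i}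
                          else {0..1})})"

end

theory Submission
  imports Defs
begin

text \<open>A basic cylinder is a product \<open>\<Pi> i. F i\<close> of subsets of \<open>[0,1]\<close>, so moving a single
  coordinate of \<open>p\<close> inside its factor stays in \<open>J\<close>. Hence \<open>\<Lambda>(J)\<close> consists of the coordinates
  whose factor is not a singleton, and every point of \<open>J\<close> agrees with \<open>p\<close> off \<open>\<Lambda>(J)\<close>.
  Since all \<open>a\<^sub>i > 0\<close>, convergence in \<open>\<parallel>\<cdot>\<parallel>\<^sub>a\<close> implies coordinatewise convergence, so both sets
  lie in the flat of those \<open>y \<in> M\<^sub>a\<close> with \<open>y\<^sub>j = p\<^sub>j\<close> for \<open>j \<notin> \<Lambda>(J)\<close>. Conversely, every such \<open>y\<close>
  is the \<open>\<parallel>\<cdot>\<parallel>\<^sub>a\<close>-limit of its truncations, which are finite combinations of the vectors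
  \<open>e\<^sub>i\<close>, \<open>i \<in> \<Lambda>(J)\<close>, and equally of the vectors \<open>x\<^sub>i - p\<close>, where \<open>x\<^sub>i \<in> J\<close> differs from \<open>p\<close>
  in coordinate \<open>i\<close> only.\<close>

definition coordinate_flat :: "(nat \<Rightarrow> real) \<Rightarrow> (nat \<Rightarrow> real) \<Rightarrow> nat set \<Rightarrow> (nat \<Rightarrow> real) set" where
  "coordinate_flat a p L = {y \<in> Ma a. \<forall>j. j \<notin> L \<longrightarrow> y j = p j}"

lemma Ma_diff:
  assumes "x \<in> Ma a" "y \<in> Ma a"
  shows "(\<lambda>j. x j - y j) \<in> Ma a"
proof -
  have bound: "(a i)\<^sup>2 * (x i - y i)\<^sup>2 \<le> 2 * ((a i)\<^sup>2 * (x i)\<^sup>2) + 2 * ((a i)\<^sup>2 * (y i)\<^sup>2)" for i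
  proof -
    have "(x i - y i)\<^sup>2 \<le> 2 * (x i)\<^sup>2 + 2 * (y i)\<^sup>2"
      using zero_le_power2[of "x i + y i"] unfolding power2_sum power2_diff by linarith
    then have "(a i)\<^sup>2 * (x i - y i)\<^sup>2 \<le> (a i)\<^sup>2 * (2 * (x i)\<^sup>2 + 2 * (y i)\<^sup>2)"
      by (rule mult_left_mono) simp
    then show ?thesis
      by (simp add: algebra_simps)
  qed
  have "summable (\<lambda>i. 2 * ((a i)\<^sup>2 * (x i)\<^sup>2) + 2 * ((a i)\<^sup>2 * (y i)\<^sup>2))"
    using assms unfolding Ma_def by (intro summable_add summable_mult) auto
  then show ?thesis
    unfolding Ma_def mem_Collect_eq by (rule summable_comparison_test') (use bound in simp)
qed

lemma norm_a_coordinate_le: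
  assumes "z \<in> Ma a"
  shows "\<bar>a j * z j\<bar> \<le> norm_a a z"
proof -
  have "summable (\<lambda>i. (a i)\<^sup>2 * z i * z i)"
    using assms unfolding Ma_def by (simp add: power2_eq_square mult.assoc)
  then have "(\<Sum>i\<in>{j}. (a i)\<^sup>2 * z i * z i) \<le> inner_a a z z"
    unfolding inner_a_def by (rule sum_le_suminf) (auto simp: mult.assoc)
  then have "(a j * z j)\<^sup>2 \<le> inner_a a z z"
    by (simp add: power2_eq_square algebra_simps)
  then show ?thesis
    unfolding norm_a_def using real_sqrt_le_mono by fastforce
qed

lemma a_limit_coordinate:
  assumes lim: "a_limit a S y" and "a j \<noteq> 0"
  shows "(\<lambda>N. S N j) \<longlonglongrightarrow> y j"
proof (rule LIMSEQ_I)
  fix r :: real assume "r > 0"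
  then have "\<forall>\<^sub>F N in sequentially. (\<lambda>i. S N i - y i) \<in> Ma a \<and>
      norm_a a (\<lambda>i. S N i - y i) < \<bar>a j\<bar> * r"
    using lim \<open>a j \<noteq> 0\<close> unfolding a_limit_def by simp
  then obtain N0 where N0: "\<And>N. N \<ge> N0 \<Longrightarrow> \<bar>a j * (S N j - y j)\<bar> < \<bar>a j\<bar> * r"
    unfolding eventually_sequentially using norm_a_coordinate_le order.strict_trans1 by blast
  show "\<exists>N0. \<forall>N\<ge>N0. norm (S N j - y j) < r"
    using N0 \<open>a j \<noteq> 0\<close> by (auto simp: abs_mult)
qed

lemma a_limit_coordinate_const:
  assumes "a_limit a S y" "a j \<noteq> 0" "\<And>N. S N j = c"
  shows "y j = c"
  using a_limit_coordinate[OF assms(1,2)] assms(3) LIMSEQ_unique by (simp add: LIMSEQ_const_iff)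

text \<open>Filling in the first \<open>N\<close> coordinates of \<open>y\<close> on top of \<open>p\<close> leaves an error whose
  squared norm is a tail of the convergent series \<open>\<Sum> a\<^sub>j\<^sup>2 (p\<^sub>j - y\<^sub>j)\<^sup>2\<close>.\<close>

lemma a_limit_truncation:
  assumes y: "y \<in> Ma a" and p: "p \<in> Ma a"
  shows "a_limit a (\<lambda>N j. if j < N then y j else p j) y"
  unfolding a_limit_def
proof (intro conjI y allI impI)
  fix r :: real assume "r > 0"
  define g where "g j = (a j)\<^sup>2 * (p j - y j)\<^sup>2" for j
  have g: "summable g" using Ma_diff[OF p y] unfolding Ma_def g_def by simp
  define d where "d N = (\<lambda>j. (if j < N then y j else p j) - y j)" for N
  have d_sums: "(\<lambda>j. (a j)\<^sup>2 * d N j * d N j) sums (suminf g - sum g {..<N})" for N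
  proof -
    have "(\<lambda>j. if j \<in> {..<N} then 0 else g j) sums (suminf g - sum g {..<N})"
      by (rule sums_If_finite_set'[OF summable_sums[OF g]]) (auto simp: sum_negf)
    moreover have "(\<lambda>j. if j \<in> {..<N} then 0 else g j) = (\<lambda>j. (a j)\<^sup>2 * d N j * d N j)"
      by (auto simp: d_def g_def power2_eq_square)
    ultimately show ?thesis by simp
  qed
  have d_Ma: "d N \<in> Ma a" for N
    using sums_summable[OF d_sums] unfolding Ma_def by (simp add: power2_eq_square mult.assoc)
  have d_norm: "norm_a a (d N) = sqrt (suminf g - sum g {..<N})" for N
    unfolding norm_a_def inner_a_def using sums_unique[OF d_sums] by simp
  have "(\<lambda>N. sqrt (suminf g - sum g {..<N})) \<longlonglongrightarrow> 0"
    using tendsto_real_sqrt[OF tendsto_diff[OF tendsto_const[of "suminf g"] summable_LIMSEQ[OF g]]] by simp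
  then have "\<forall>\<^sub>F N in sequentially. sqrt (suminf g - sum g {..<N}) < r"
    using \<open>r > 0\<close> by (rule order_tendstoD(2))
  then show "\<forall>\<^sub>F N in sequentially. (\<lambda>j. (if j < N then y j else p j) - y j) \<in> Ma a \<and>
      norm_a a (\<lambda>j. (if j < N then y j else p j) - y j) < r"
    unfolding d_def[symmetric] by (rule eventually_mono) (simp add: d_Ma d_norm)
qed

lemma sum_scaled_e:
  "(\<Sum>i\<in>L \<inter> {..<N}. c i * e i j) = (if j \<in> L \<and> j < N then c j else 0)"
  by (simp add: e_def if_distrib sum.delta cong: if_cong)

lemma a_limit_flat_truncation:
  assumes y: "y \<in> coordinate_flat a p L" and "p \<in> Ma a"
  shows "a_limit a (\<lambda>N j. p j + (\<Sum>i\<in>L \<inter> {..<N}. (y i - p i) * e i j)) y"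
proof -
  have "(\<lambda>N j. p j + (\<Sum>i\<in>L \<inter> {..<N}. (y i - p i) * e i j)) = (\<lambda>N j. if j < N then y j else p j)"
    using y by (auto simp: fun_eq_iff sum_scaled_e coordinate_flat_def)
  then show ?thesis
    using a_limit_truncation y assms(2) by (simp add: coordinate_flat_def)
qed

lemma a_limit_unit_vector_sums:
  assumes "p \<in> Ma a" and "\<And>i. a i \<noteq> 0"
  shows "{y. \<exists>c. a_limit a (\<lambda>N j. p j + (\<Sum>i\<in>L \<inter> {..<N}. c i * e i j)) y} = coordinate_flat a p L"
proof (intro set_eqI iffI)
  fix y assume "y \<in> {y. \<exists>c. a_limit a (\<lambda>N j. p j + (\<Sum>i\<in>L \<inter> {..<N}. c i * e i j)) y}"
  then obtain c where lim: "a_limit a (\<lambda>N j. p j + (\<Sum>i\<in>L \<inter> {..<N}. c i * e i j)) y"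
    by blast
  have "y j = p j" if "j \<notin> L" for j
    using a_limit_coordinate_const[OF lim assms(2)] that by (simp add: sum_scaled_e)
  with lim show "y \<in> coordinate_flat a p L"
    unfolding coordinate_flat_def a_limit_def by blast
next
  fix y assume "y \<in> coordinate_flat a p L"
  with assms(1) show "y \<in> {y. \<exists>c. a_limit a (\<lambda>N j. p j + (\<Sum>i\<in>L \<inter> {..<N}. c i * e i j)) y}"
    by (intro CollectI exI[of _ "\<lambda>i. y i - p i"] a_limit_flat_truncation)
qed

lemma basic_cylinder_Pi:
  assumes "basic_cylinder J"
  obtains F where "J = (\<Pi> i\<in>UNIV. F i)" and "\<And>i. F i \<subseteq> {0..1}"
proof -
  obtain n :: nat and L1 L2 L3 L4 and p1 p2 :: "nat \<Rightarrow> real" where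
    bounds: "\<forall>i \<in> L1 \<union> L2 \<union> L3. 0 < p1 i \<and> p1 i < p2 i \<and> p2 i < 1"
      "\<forall>i \<in> L4. 0 \<le> p1 i \<and> p1 i \<le> 1"
    and J: "J = {x. \<forall>i. x i \<in> (if i \<in> L1 then {0..p2 i}
                          else if i \<in> L2 then {p1 i..p2 i}
                          else if i \<in> L3 then {p1 i..1}
                          else if i \<in> L4 then {p1 i}
                          else {0..1})}"
    using assms unfolding basic_cylinder_def by blast
  define F where "F i = (if i \<in> L1 then {0..p2 i}
                          else if i \<in> L2 then {p1 i..p2 i}
                          else if i \<in> L3 then {p1 i..1}
                          else if i \<in> L4 then {p1 i}
                          else {0..1})" for i
  have "J = (\<Pi> i\<in>UNIV. F i)"
    unfolding J F_def Pi_def by simp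
  moreover have "F i \<subseteq> {0..1}" for i
    using bounds[rule_format, of i] unfolding F_def by auto
  ultimately show ?thesis
    using that by blast
qed

lemma Pi_unit_interval_subset_Ma:
  assumes "summable (\<lambda>i. (a i)\<^sup>2)" and "\<And>i. F i \<subseteq> {0..1}"
  shows "(\<Pi> i\<in>UNIV. F i) \<subseteq> Ma a"
proof
  fix x assume "x \<in> (\<Pi> i\<in>UNIV. F i)"
  then have "x i \<in> {0..1}" for i
    using assms(2)[of i] by (auto simp: Pi_iff)
  then have "(x i)\<^sup>2 \<le> 1" for i
    by (simp add: power_le_one)
  then have "norm ((a i)\<^sup>2 * (x i)\<^sup>2) \<le> (a i)\<^sup>2" for i
    by (simp add: mult_left_le)
  then show "x \<in> Ma a"
    unfolding Ma_def mem_Collect_eq by (rule summable_comparison_test'[OF assms(1)])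
qed

lemma Lam_Pi:
  assumes "p \<in> (\<Pi> i\<in>UNIV. F i)"
  shows "Lam (\<Pi> i\<in>UNIV. F i) = {j. \<exists>t\<in>F j. t \<noteq> p j}"
proof (intro set_eqI iffI)
  fix j assume "j \<in> Lam (\<Pi> i\<in>UNIV. F i)"
  then obtain x c where "x \<in> (\<Pi> i\<in>UNIV. F i)" "c \<noteq> 0" "(\<lambda>k. x k + c * e j k) \<in> (\<Pi> i\<in>UNIV. F i)"
    unfolding Lam_def by blast
  then have "x j \<in> F j" "(\<lambda>k. x k + c * e j k) j \<in> F j"
    by (simp_all add: Pi_iff)
  then have "x j \<in> F j" "x j + c \<in> F j"
    by (simp_all add: e_def)
  moreover have "x j \<noteq> p j \<or> x j + c \<noteq> p j"
    using \<open>c \<noteq> 0\<close> by auto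
  ultimately show "j \<in> {j. \<exists>t\<in>F j. t \<noteq> p j}"
    by blast
next
  fix j assume "j \<in> {j. \<exists>t\<in>F j. t \<noteq> p j}"
  then obtain t where "t \<in> F j" "t \<noteq> p j" by blast
  moreover have "(\<lambda>k. p k + (t - p j) * e j k) = p(j := t)"
    by (auto simp: e_def fun_eq_iff)
  ultimately show "j \<in> Lam (\<Pi> i\<in>UNIV. F i)"
    unfolding Lam_def using assms by (intro CollectI bexI[of _ p] exI[of _ "t - p j"]) auto
qed

lemma GS_Pi:
  assumes "\<And>i. a i \<noteq> 0" and "(\<Pi> i\<in>UNIV. F i) \<subseteq> Ma a" and p: "p \<in> (\<Pi> i\<in>UNIV. F i)"
  shows "GS a (\<Pi> i\<in>UNIV. F i) p = coordinate_flat a p (Lam (\<Pi> i\<in>UNIV. F i))"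
    (is "GS a ?J p = coordinate_flat a p ?L")
proof (intro set_eqI iffI)
  fix y assume "y \<in> GS a ?J p"
  then obtain I x \<alpha> where x: "\<forall>i\<in>I. x i \<in> ?J"
    and lim: "a_limit a (\<lambda>N j. p j + (\<Sum>i\<in>I \<inter> {..<N}. \<alpha> i * (x i j - p j))) y"
    unfolding GS_def by blast
  have "y j = p j" if "j \<notin> ?L" for j
  proof (rule a_limit_coordinate_const[OF lim assms(1)])
    have "x i j = p j" if "i \<in> I" for i
      using \<open>j \<notin> ?L\<close> x that by (auto simp: Lam_Pi[OF p])
    then show "p j + (\<Sum>i\<in>I \<inter> {..<N}. \<alpha> i * (x i j - p j)) = p j" for N
      by simp
  qed
  with lim show "y \<in> coordinate_flat a p ?L"
    unfolding coordinate_flat_def a_limit_def by blast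
next
  fix y assume y: "y \<in> coordinate_flat a p ?L"
  have "\<exists>t\<in>F i. t \<noteq> p i" if "i \<in> ?L" for i
    using that by (simp add: Lam_Pi[OF p])
  then obtain t where t: "\<And>i. i \<in> ?L \<Longrightarrow> t i \<in> F i \<and> t i \<noteq> p i"
    by metis
  define x where "x i = p(i := t i)" for i
  define \<alpha> where "\<alpha> i = (y i - p i) / (t i - p i)" for i
  have x_J: "\<forall>i\<in>?L. x i \<in> ?J"
    using p t by (auto simp: x_def)
  have "(\<Sum>i\<in>?L \<inter> {..<N}. \<alpha> i * (x i j - p j)) = (\<Sum>i\<in>?L \<inter> {..<N}. (y i - p i) * e i j)" for N j
    by (rule sum.cong) (use t in \<open>auto simp: x_def \<alpha>_def e_def\<close>)
  moreover have "p \<in> Ma a"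
    using assms(2) p by blast
  ultimately have "a_limit a (\<lambda>N j. p j + (\<Sum>i\<in>?L \<inter> {..<N}. \<alpha> i * (x i j - p j))) y"
    using a_limit_flat_truncation[OF y] by simp
  with x_J show "y \<in> GS a ?J p"
    unfolding GS_def by blast
qed

theorem theorem3p5:
  fixes a :: "nat \<Rightarrow> real" and J :: "(nat \<Rightarrow> real) set" and p :: "nat \<Rightarrow> real"
  assumes "\<forall>i. 0 < a i"
    and "summable (\<lambda>i. (a i)\<^sup>2)"
    and "basic_cylinder J"
    and "J \<noteq> {}"
    and "p \<in> J"
  shows "GS a J p =
    {y. \<exists>\<alpha>::nat \<Rightarrow> real.
          a_limit a (\<lambda>N j. p j + (\<Sum>i\<in>Lam J \<inter> {..<N}. \<alpha> i * e i j)) y}"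
proof -
  obtain F where J: "J = (\<Pi> i\<in>UNIV. F i)" and F: "\<And>i. F i \<subseteq> {0..1}"
    using basic_cylinder_Pi[OF assms(3)] by blast
  have a: "\<And>i. a i \<noteq> 0"
    using assms(1) by (metis less_irrefl)
  have J_Ma: "J \<subseteq> Ma a"
    unfolding J using Pi_unit_interval_subset_Ma[OF assms(2) F] .
  have "GS a J p = coordinate_flat a p (Lam J)"
    unfolding J using GS_Pi[OF a J_Ma[unfolded J] assms(5)[unfolded J]] .
  also have "\<dots> = {y. \<exists>\<alpha>. a_limit a (\<lambda>N j. p j + (\<Sum>i\<in>Lam J \<inter> {..<N}. \<alpha> i * e i j)) y}"
    using a_limit_unit_vector_sums[symmetric] J_Ma assms(5) a by blast
  finally show ?thesis .
qed

end
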